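(* Let $0\le a\le b\le1$, and in $l_\infty^2$ let $H_1=\{(\xi_1,\xi_2):\xi_2\ge a\xi_1\}$ and $H_2=\{(\xi_1,\xi_2):\xi_2\le b\xi_1\}$ with the restricted metrics. Let $X$ be the gluing of $H_1$ and $H_2$ along $\mathbb{R}$ via the isometries $\xi\mapsto(\xi,a\xi)\in H_1$ and $\xi\mapsto(\xi,b\xi)\in H_2$ (i.e. identifying $(\xi,a\xi)$ with $(\xi,b\xi)$). Then $X$ is hyperconvex if and only if $a=b$.
   Context: $l_\infty^2$ is $\mathbb{R}^2$ with the metric $d((\xi_1,\xi_2),(\eta_1,\eta_2))=\max(|\xi_1-\eta_1|,|\xi_2-\eta_2|)$. A metric space is hyperconvex if every collection of closed balls $\{B(x_i,r_i)\}$ with $d(x_i,x_j)\le r_i+r_j$ has non-empty intersection. The gluing of $X_1,X_2$ along $A$ via isometric embeddings $\varphi_k\colon A\to X_k$ with closed images is $X_1\sqcup X_2/(\varphi_1(a)\sim\varphi_2(a))$ with metric $d_k$ on $X_k$ and $d(x,y)=\inf_{a\in A}\{d_1(x,\varphi_1(a))+d_2(\varphi_2(a),y)\}$ for $x\in X_1,y\in X_2$. *)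

theory Defs
  imports Complex_Main
begin

definition linf_dist :: "real \<times> real \<Rightarrow> real \<times> real \<Rightarrow> real" where
  "linf_dist p q = max \<bar>fst p - fst q\<bar> \<bar>snd p - snd q\<bar>"

definition hyperconvex :: "'a set \<Rightarrow> ('a \<Rightarrow> 'a \<Rightarrow> real) \<Rightarrow> bool" where
  "hyperconvex S d \<longleftrightarrow>
     (\<forall>B :: ('a \<times> real) set. fst ` B \<subseteq> S \<longrightarrow>
        (\<forall>(x, r) \<in> B. \<forall>(y, s) \<in> B. d x y \<le> r + s) \<longrightarrow>
        (\<exists>z \<in> S. \<forall>(x, r) \<in> B. d x z \<le> r))"

definition glue_dist ::
  "('a \<Rightarrow> 'a \<Rightarrow> real) \<Rightarrow> ('b \<Rightarrow> 'b \<Rightarrow> real) \<Rightarrow> ('c \<Rightarrow> 'a) \<Rightarrow> ('c \<Rightarrow> 'b)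
    \<Rightarrow> 'a + 'b \<Rightarrow> 'a + 'b \<Rightarrow> real" where
  "glue_dist d1 d2 \<phi>1 \<phi>2 x y =
     (case (x, y) of
        (Inl p, Inl q) \<Rightarrow> d1 p q
      | (Inr p, Inr q) \<Rightarrow> d2 p q
      | (Inl p, Inr q) \<Rightarrow> (INF c. d1 p (\<phi>1 c) + d2 (\<phi>2 c) q)
      | (Inr p, Inl q) \<Rightarrow> (INF c. d1 q (\<phi>1 c) + d2 (\<phi>2 c) p))"

definition glue_rel :: "('c \<Rightarrow> 'a) \<Rightarrow> ('c \<Rightarrow> 'b) \<Rightarrow> 'a + 'b \<Rightarrow> 'a + 'b \<Rightarrow> bool" where
  "glue_rel \<phi>1 \<phi>2 x y \<longleftrightarrow> x = y \<or> (\<exists>c. x = Inl (\<phi>1 c) \<and> y = Inr (\<phi>2 c))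
                                    \<or> (\<exists>c. x = Inr (\<phi>2 c) \<and> y = Inl (\<phi>1 c))"

definition glue_space :: "'a set \<Rightarrow> 'b set \<Rightarrow> ('c \<Rightarrow> 'a) \<Rightarrow> ('c \<Rightarrow> 'b) \<Rightarrow> ('a + 'b) set set" where
  "glue_space X1 X2 \<phi>1 \<phi>2 =
     (\<lambda>x. {y \<in> Inl ` X1 \<union> Inr ` X2. glue_rel \<phi>1 \<phi>2 x y}) ` (Inl ` X1 \<union> Inr ` X2)"

definition glue_metric ::
  "('a \<Rightarrow> 'a \<Rightarrow> real) \<Rightarrow> ('b \<Rightarrow> 'b \<Rightarrow> real) \<Rightarrow> ('c \<Rightarrow> 'a) \<Rightarrow> ('c \<Rightarrow> 'b)
    \<Rightarrow> ('a + 'b) set \<Rightarrow> ('a + 'b) set \<Rightarrow> real" where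
  "glue_metric d1 d2 \<phi>1 \<phi>2 P Q = glue_dist d1 d2 \<phi>1 \<phi>2 (SOME x. x \<in> P) (SOME y. y \<in> Q)"

end

theory Submission
  imports Defs "HOL-Analysis.Abstract_Metric_Spaces"
begin

text \<open>Points of the glued space are classes of points of the disjoint union, and the glued
metric only depends on representatives, so hyperconvexity can be tested on the disjoint union
with the gluing distance. For \<open>a = b\<close> the two half-planes cover the plane, and a shortest way
from one to the other crosses the common line on the straight segment, so the gluing distance
is the \<open>l\<^sub>\<infinity>\<close>-distance of the plane, which is hyperconvex as the max-product of two lines.
For \<open>a < b\<close> the balls of radii \<open>2 - (b - a)\<close>, \<open>1\<close>, \<open>1\<close> about \<open>(0, 1) \<in> H\<^sub>1\<close> and
\<open>(0, -2), (2, 0) \<in> H\<^sub>2\<close> satisfy the hypothesis, but the last two only share the point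
\<open>(1, -1)\<close> of \<open>H\<^sub>2\<close>, whose distance from \<open>(0, 1)\<close> is \<open>2\<close> because every path between them
has to cross the wedge between the two lines.\<close>

lemma hyperconvex_iff_isometric_surjection:
  fixes f :: "'a \<Rightarrow> 'b"
  assumes onto: "f ` S = T"
    and isometric: "\<And>x y. x \<in> S \<Longrightarrow> y \<in> S \<Longrightarrow> dT (f x) (f y) = dS x y"
  shows "hyperconvex S dS \<longleftrightarrow> hyperconvex T dT"
proof
  assume hS: "hyperconvex S dS"
  show "hyperconvex T dT"
    unfolding hyperconvex_def
  proof (intro allI impI)
    fix B :: "('b \<times> real) set"
    assume BT: "fst ` B \<subseteq> T" and pw: "\<forall>(x, r) \<in> B. \<forall>(y, s) \<in> B. dT x y \<le> r + s"
    define B' where "B' = {(x, r). x \<in> S \<and> (f x, r) \<in> B}"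
    have "fst ` B' \<subseteq> S" "\<forall>(x, r) \<in> B'. \<forall>(y, s) \<in> B'. dS x y \<le> r + s"
      using pw isometric unfolding B'_def by fastforce+
    then obtain z where z: "z \<in> S" "\<forall>(x, r) \<in> B'. dS x z \<le> r"
      using hS unfolding hyperconvex_def by blast
    have "dT y (f z) \<le> r" if "(y, r) \<in> B" for y r
    proof -
      from that BT onto obtain x where "x \<in> S" "y = f x" by force
      then show ?thesis using z that isometric unfolding B'_def by auto
    qed
    then show "\<exists>z \<in> T. \<forall>(x, r) \<in> B. dT x z \<le> r"
      using z(1) onto by blast
  qed
next
  assume hT: "hyperconvex T dT"
  show "hyperconvex S dS"
    unfolding hyperconvex_def
  proof (intro allI impI)
    fix B :: "('a \<times> real) set"
    assume BS: "fst ` B \<subseteq> S" and pw: "\<forall>(x, r) \<in> B. \<forall>(y, s) \<in> B. dS x y \<le> r + s"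
    define B' where "B' = (\<lambda>(x, r). (f x, r)) ` B"
    have "fst ` B' \<subseteq> T"
      using BS onto unfolding B'_def by force
    moreover have "\<forall>(x, r) \<in> B'. \<forall>(y, s) \<in> B'. dT x y \<le> r + s"
    proof (clarsimp simp: B'_def)
      fix x r y s assume "(x, r) \<in> B" "(y, s) \<in> B"
      then show "dT (f x) (f y) \<le> r + s"
        using pw BS isometric by (force simp: image_subset_iff)
    qed
    ultimately obtain w where w: "w \<in> T" "\<forall>(x, r) \<in> B'. dT x w \<le> r"
      using hT unfolding hyperconvex_def by blast
    obtain z where z: "z \<in> S" "w = f z" using w(1) onto by blast
    have "dS x z \<le> r" if "(x, r) \<in> B" for x r
    proof -
      have "x \<in> S" using BS that by force
      moreover have "(f x, r) \<in> B'" unfolding B'_def using that by force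
      ultimately show ?thesis using w(2) z isometric by fastforce
    qed
    then show "\<exists>z \<in> S. \<forall>(x, r) \<in> B. dS x z \<le> r"
      using z(1) by blast
  qed
qed

lemma hyperconvex_real_line: "hyperconvex UNIV (\<lambda>x y :: real. \<bar>x - y\<bar>)"
  unfolding hyperconvex_def
proof (intro allI impI)
  fix B :: "(real \<times> real) set"
  assume pw: "\<forall>(x, r) \<in> B. \<forall>(y, s) \<in> B. \<bar>x - y\<bar> \<le> r + s"
  show "\<exists>z \<in> UNIV. \<forall>(x, r) \<in> B. \<bar>x - z\<bar> \<le> r"
  proof (cases "B = {}")
    case False
    define z where "z = Sup ((\<lambda>(x, r). x - r) ` B)"
    have "\<bar>x - z\<bar> \<le> r" if "(x, r) \<in> B" for x r
    proof -
      have below: "y - s \<le> x + r" if "(y, s) \<in> B" for y s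
        using pw that \<open>(x, r) \<in> B\<close> by fastforce
      have "x - r \<le> z"
        unfolding z_def using that below by (intro cSup_upper bdd_aboveI) force+
      moreover have "z \<le> x + r"
        unfolding z_def using False below by (intro cSup_least) auto
      ultimately show ?thesis by linarith
    qed
    then show ?thesis by blast
  qed simp
qed

lemma hyperconvex_max_product:
  assumes "hyperconvex S1 d1" and "hyperconvex S2 d2"
  shows "hyperconvex (S1 \<times> S2) (\<lambda>p q. max (d1 (fst p) (fst q)) (d2 (snd p) (snd q)))"
  unfolding hyperconvex_def
proof (intro allI impI)
  fix B :: "(('a \<times> 'b) \<times> real) set"
  assume BS: "fst ` B \<subseteq> S1 \<times> S2"
    and pw: "\<forall>(x, r) \<in> B. \<forall>(y, s) \<in> B. max (d1 (fst x) (fst y)) (d2 (snd x) (snd y)) \<le> r + s"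
  define B1 where "B1 = (\<lambda>(x, r). (fst x, r)) ` B"
  define B2 where "B2 = (\<lambda>(x, r). (snd x, r)) ` B"
  have "fst ` B1 \<subseteq> S1" "\<forall>(x, r) \<in> B1. \<forall>(y, s) \<in> B1. d1 x y \<le> r + s"
    using BS pw unfolding B1_def by (fastforce simp: subset_iff)+
  then obtain z1 where z1: "z1 \<in> S1" "\<forall>(x, r) \<in> B1. d1 x z1 \<le> r"
    using assms(1) unfolding hyperconvex_def by blast
  have "fst ` B2 \<subseteq> S2" "\<forall>(x, r) \<in> B2. \<forall>(y, s) \<in> B2. d2 x y \<le> r + s"
    using BS pw unfolding B2_def by (fastforce simp: subset_iff)+
  then obtain z2 where z2: "z2 \<in> S2" "\<forall>(x, r) \<in> B2. d2 x z2 \<le> r"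
    using assms(2) unfolding hyperconvex_def by blast
  have "\<forall>(x, r) \<in> B. max (d1 (fst x) z1) (d2 (snd x) z2) \<le> r"
    using z1(2) z2(2) unfolding B1_def B2_def by fastforce
  then show "\<exists>z \<in> S1 \<times> S2. \<forall>(x, r) \<in> B. max (d1 (fst x) (fst z)) (d2 (snd x) (snd z)) \<le> r"
    using z1(1) z2(1) by (intro bexI[of _ "(z1, z2)"]) auto
qed

lemma hyperconvex_linf_plane: "hyperconvex UNIV linf_dist"
  using hyperconvex_max_product[OF hyperconvex_real_line hyperconvex_real_line]
  by (simp add: linf_dist_def[abs_def])

locale metric_gluing =
  M1: Metric_space "UNIV :: 'a set" d1 + M2: Metric_space "UNIV :: 'b set" d2
  for d1 :: "'a \<Rightarrow> 'a \<Rightarrow> real" and d2 :: "'b \<Rightarrow> 'b \<Rightarrow> real" +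
  fixes \<phi>1 :: "'c \<Rightarrow> 'a" and \<phi>2 :: "'c \<Rightarrow> 'b"
  assumes compatible: "d2 (\<phi>2 c) (\<phi>2 c') = d1 (\<phi>1 c) (\<phi>1 c')"
begin

abbreviation gdist where "gdist \<equiv> glue_dist d1 d2 \<phi>1 \<phi>2"

lemma glue_dist_commute: "gdist x y = gdist y x"
  by (cases x; cases y) (simp_all add: glue_dist_def M1.commute M2.commute)

lemma glue_dist_Inl_Inr_le: "gdist (Inl p) (Inr q) \<le> d1 p (\<phi>1 c) + d2 (\<phi>2 c) q"
  unfolding glue_dist_def
  by simp (intro cINF_lower bdd_belowI[where m = 0]; auto intro: add_nonneg_nonneg)

lemma glue_dist_Inl_Inr_ge:
  "(\<And>c. L \<le> d1 p (\<phi>1 c) + d2 (\<phi>2 c) q) \<Longrightarrow> L \<le> gdist (Inl p) (Inr q)"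
  unfolding glue_dist_def by (simp add: cINF_greatest)

lemma glue_dist_identified: "gdist (Inl (\<phi>1 c)) y = gdist (Inr (\<phi>2 c)) y"
proof (cases y)
  case (Inl q)
  have "(INF c'. d1 q (\<phi>1 c') + d2 (\<phi>2 c') (\<phi>2 c)) = d1 q (\<phi>1 c)"
    unfolding compatible
    by (rule cInf_eq_minimum) (auto intro: M1.triangle intro!: image_eqI[where x = c])
  then show ?thesis using Inl by (simp add: glue_dist_def M1.commute)
next
  case (Inr q)
  have "(INF c'. d1 (\<phi>1 c) (\<phi>1 c') + d2 (\<phi>2 c') q) = d2 (\<phi>2 c) q"
    unfolding compatible[symmetric]
    by (rule cInf_eq_minimum) (auto intro: M2.triangle intro!: image_eqI[where x = c])
  then show ?thesis using Inr by (simp add: glue_dist_def)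
qed

lemma glue_dist_glue_rel: "glue_rel \<phi>1 \<phi>2 x x' \<Longrightarrow> gdist x y = gdist x' y"
  unfolding glue_rel_def using glue_dist_identified by auto

abbreviation glue_class where
  "glue_class X1 X2 g \<equiv> {y \<in> Inl ` X1 \<union> Inr ` X2. glue_rel \<phi>1 \<phi>2 g y}"

lemma glue_metric_glue_class:
  assumes "g \<in> Inl ` X1 \<union> Inr ` X2" and "h \<in> Inl ` X1 \<union> Inr ` X2"
  shows "glue_metric d1 d2 \<phi>1 \<phi>2 (glue_class X1 X2 g) (glue_class X1 X2 h) = gdist g h"
proof -
  define x where "x = (SOME x. x \<in> glue_class X1 X2 g)"
  define y where "y = (SOME y. y \<in> glue_class X1 X2 h)"
  have "g \<in> glue_class X1 X2 g" "h \<in> glue_class X1 X2 h"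
    using assms by (simp_all add: glue_rel_def)
  then have "x \<in> glue_class X1 X2 g" "y \<in> glue_class X1 X2 h"
    unfolding x_def y_def some_in_eq by blast+
  then have "glue_rel \<phi>1 \<phi>2 g x" "glue_rel \<phi>1 \<phi>2 h y" by simp_all
  then have "gdist g h = gdist x y"
    by (metis glue_dist_glue_rel glue_dist_commute)
  then show ?thesis unfolding glue_metric_def x_def y_def by simp
qed

lemma hyperconvex_glue_space_iff:
  "hyperconvex (glue_space X1 X2 \<phi>1 \<phi>2) (glue_metric d1 d2 \<phi>1 \<phi>2)
     \<longleftrightarrow> hyperconvex (Inl ` X1 \<union> Inr ` X2) gdist"
  unfolding glue_space_def
  by (rule hyperconvex_iff_isometric_surjection[where f = "glue_class X1 X2", symmetric])
    (simp, blast intro: glue_metric_glue_class)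

end

lemma Metric_space_linf_dist: "Metric_space UNIV linf_dist"
  by unfold_locales (auto simp: linf_dist_def prod_eq_iff abs_minus_commute max_def abs_if)

lemma linf_dist_line:
  assumes "0 \<le> k" and "k \<le> 1"
  shows "linf_dist (c, k * c) (c', k * c') = \<bar>c - c'\<bar>"
proof -
  have "\<bar>k * c - k * c'\<bar> = k * \<bar>c - c'\<bar>"
    using assms by (simp add: right_diff_distrib[symmetric] abs_mult)
  also have "\<dots> \<le> \<bar>c - c'\<bar>"
    using assms by (simp add: mult_left_le_one_le)
  finally show ?thesis by (simp add: linf_dist_def)
qed

lemma metric_gluing_lines:
  assumes "0 \<le> a" "a \<le> 1" "0 \<le> b" "b \<le> 1"
  shows "metric_gluing linf_dist linf_dist (\<lambda>t. (t, a * t)) (\<lambda>t. (t, b * t))"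
  by (simp add: metric_gluing_def metric_gluing_axioms_def Metric_space_linf_dist
      linf_dist_line assms)

lemma linf_dist_segment:
  fixes p q :: "real \<times> real"
  assumes "0 \<le> t" and "t \<le> 1"
  defines "w \<equiv> (fst p + t * (fst q - fst p), snd p + t * (snd q - snd p))"
  shows "linf_dist p w + linf_dist w q = linf_dist p q"
proof -
  have "fst p - fst w = t * (fst p - fst q)" "snd p - snd w = t * (snd p - snd q)"
    "fst w - fst q = (1 - t) * (fst p - fst q)" "snd w - snd q = (1 - t) * (snd p - snd q)"
    unfolding w_def by (simp_all add: algebra_simps)
  then have "linf_dist p w = t * linf_dist p q" "linf_dist w q = (1 - t) * linf_dist p q"
    using assms(1,2) unfolding linf_dist_def by (simp_all add: abs_mult max_mult_distrib_left)
  then show ?thesis by (simp add: algebra_simps)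
qed

lemma glue_dist_across_line:
  assumes "0 \<le> a" "a \<le> 1" and "a * fst p \<le> snd p" and "snd q \<le> a * fst q"
  shows "glue_dist linf_dist linf_dist (\<lambda>t. (t, a * t)) (\<lambda>t. (t, a * t)) (Inl p) (Inr q)
    = linf_dist p q"
proof -
  interpret metric_gluing linf_dist linf_dist "\<lambda>t. (t, a * t)" "\<lambda>t. (t, a * t)"
    using metric_gluing_lines[OF assms(1,2,1,2)] .
  define \<alpha> where "\<alpha> = snd p - a * fst p"
  define \<beta> where "\<beta> = a * fst q - snd q"
  define t where "t = (if \<alpha> + \<beta> = 0 then 0 else \<alpha> / (\<alpha> + \<beta>))"
  have "0 \<le> \<alpha>" "0 \<le> \<beta>" using assms(3,4) unfolding \<alpha>_def \<beta>_def by simp_all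
  then have t: "0 \<le> t" "t \<le> 1" "t * (\<alpha> + \<beta>) = \<alpha>"
    unfolding t_def by auto
  \<comment> \<open>\<open>(c, a * c)\<close> is where the segment from \<open>p\<close> to \<open>q\<close> crosses the common line\<close>
  define c where "c = fst p + t * (fst q - fst p)"
  have "a * c = snd p + t * (snd q - snd p)"
    using t(3) unfolding c_def \<alpha>_def \<beta>_def by (simp add: algebra_simps)
  then have "linf_dist p (c, a * c) + linf_dist (c, a * c) q = linf_dist p q"
    using linf_dist_segment[OF t(1,2)] unfolding c_def by simp
  moreover have "linf_dist p q \<le> linf_dist p (c', a * c') + linf_dist (c', a * c') q" for c'
    by (rule M1.triangle) simp_all
  ultimately show ?thesis
    using glue_dist_Inl_Inr_le[of p q c] glue_dist_Inl_Inr_ge[of "linf_dist p q" p q]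
    by simp
qed

lemma hyperconvex_glued_half_planes_same_line:
  assumes "0 \<le> a" and "a \<le> 1"
  shows "hyperconvex (Inl ` {p. a * fst p \<le> snd p} \<union> Inr ` {p. snd p \<le> a * fst p})
    (glue_dist linf_dist linf_dist (\<lambda>t. (t, a * t)) (\<lambda>t. (t, a * t)))"
proof -
  interpret metric_gluing linf_dist linf_dist "\<lambda>t. (t, a * t)" "\<lambda>t. (t, a * t)"
    using metric_gluing_lines[OF assms assms] .
  let ?D = "Inl ` {p. a * fst p \<le> snd p} \<union> Inr ` {p. snd p \<le> a * fst p}"
  have "p \<in> case_sum id id ` ?D" for p
  proof (cases "a * fst p \<le> snd p")
    case True
    then show ?thesis by (intro image_eqI[of _ _ "Inl p"]) simp_all
  next
    case False
    then show ?thesis by (intro image_eqI[of _ _ "Inr p"]) simp_all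
  qed
  then have "case_sum id id ` ?D = UNIV" by blast
  moreover have "gdist x y = linf_dist (case_sum id id x) (case_sum id id y)"
    if "x \<in> ?D" "y \<in> ?D" for x y
  proof (cases x; cases y)
    fix p q assume "x = Inl p" "y = Inr q"
    then show ?thesis using that glue_dist_across_line[OF assms] by auto
  next
    fix p q assume "x = Inr p" "y = Inl q"
    then show ?thesis using that glue_dist_across_line[OF assms, of q p] glue_dist_commute M1.commute
      by auto
  qed (simp_all add: glue_dist_def)
  ultimately show ?thesis
    using hyperconvex_iff_isometric_surjection[of "case_sum id id" ?D UNIV]
      hyperconvex_linf_plane by auto
qed

lemma glue_dist_ge_linf_dist_projection:
  assumes "0 \<le> a" "a \<le> 1" "0 \<le> b" "b \<le> 1"
  shows "linf_dist (fst q, b * fst q) u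
    \<le> glue_dist linf_dist linf_dist (\<lambda>t. (t, a * t)) (\<lambda>t. (t, b * t)) (Inl q) (Inr u)"
proof -
  interpret metric_gluing linf_dist linf_dist "\<lambda>t. (t, a * t)" "\<lambda>t. (t, b * t)"
    using metric_gluing_lines[OF assms] .
  show ?thesis
  proof (rule glue_dist_Inl_Inr_ge)
    fix c
    have "linf_dist (fst q, b * fst q) u \<le> linf_dist (fst q, b * fst q) (c, b * c) + linf_dist (c, b * c) u"
      by (rule M1.triangle) simp_all
    also have "\<dots> = \<bar>fst q - c\<bar> + linf_dist (c, b * c) u"
      using linf_dist_line[OF assms(3,4)] by simp
    also have "\<dots> \<le> linf_dist q (c, a * c) + linf_dist (c, b * c) u"
      by (simp add: linf_dist_def)
    finally show "linf_dist (fst q, b * fst q) u \<le> linf_dist q (c, a * c) + linf_dist (c, b * c) u" .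
  qed
qed

lemma glue_dist_across_wedge:
  assumes "0 \<le> a" "a \<le> b" "b \<le> 1"
  shows "2 \<le> glue_dist linf_dist linf_dist (\<lambda>t. (t, a * t)) (\<lambda>t. (t, b * t)) (Inl (0, 1)) (Inr (1, -1))"
proof -
  interpret metric_gluing linf_dist linf_dist "\<lambda>t. (t, a * t)" "\<lambda>t. (t, b * t)"
    using metric_gluing_lines assms by simp
  show ?thesis
  proof (rule glue_dist_Inl_Inr_ge)
    fix c :: real
    show "2 \<le> linf_dist (0, 1) (c, a * c) + linf_dist (c, b * c) (1, -1)"
    proof (cases "0 \<le> c")
      case True
      then have "a * c \<le> b * c" using assms by (simp add: mult_right_mono)
      then show ?thesis unfolding linf_dist_def by auto
    next
      case False
      then have "a * c \<le> 0" using assms by (simp add: mult_nonneg_nonpos)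
      then show ?thesis using False unfolding linf_dist_def by auto
    qed
  qed
qed

lemma linf_dist_two_unit_balls:
  assumes "linf_dist w (0, -2) \<le> 1" and "linf_dist w (2, 0) \<le> 1"
  shows "w = (1, -1)"
  using assms by (cases w) (auto simp: linf_dist_def)

lemma not_hyperconvex_glued_half_planes:
  assumes "0 \<le> a" "a < b" "b \<le> 1"
  shows "\<not> hyperconvex (Inl ` {p. a * fst p \<le> snd p} \<union> Inr ` {p. snd p \<le> b * fst p})
    (glue_dist linf_dist linf_dist (\<lambda>t. (t, a * t)) (\<lambda>t. (t, b * t)))"
proof
  interpret metric_gluing linf_dist linf_dist "\<lambda>t. (t, a * t)" "\<lambda>t. (t, b * t)"
    using metric_gluing_lines assms by simp
  let ?D = "Inl ` {p. a * fst p \<le> snd p} \<union> Inr ` {p. snd p \<le> b * fst p}"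
  define x1 :: "(real \<times> real) + (real \<times> real)" where "x1 = Inl (0, 1)"
  define x2 :: "(real \<times> real) + (real \<times> real)" where "x2 = Inr (0, -2)"
  define x3 :: "(real \<times> real) + (real \<times> real)" where "x3 = Inr (2, 0)"
  define B where "B = {(x1, 2 - (b - a)), (x2, 1), (x3, 1)}"
  have "gdist x1 x2 \<le> 3 - (b - a)"
    using glue_dist_Inl_Inr_le[of "(0, 1)" "(0, -2)" "-1"] assms
    by (simp add: x1_def x2_def linf_dist_def)
  moreover have "gdist x1 x3 \<le> 2"
    using glue_dist_Inl_Inr_le[of "(0, 1)" "(2, 0)" 1] assms
    by (simp add: x1_def x3_def linf_dist_def)
  moreover have "gdist x2 x3 = 2"
    by (simp add: x2_def x3_def glue_dist_def linf_dist_def)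
  moreover have "gdist x x = 0" for x
    by (cases x) (simp_all add: glue_dist_def)
  ultimately have "\<forall>(x, r) \<in> B. \<forall>(y, s) \<in> B. gdist x y \<le> r + s"
    using assms glue_dist_commute[of x2 x1] glue_dist_commute[of x3 x1] glue_dist_commute[of x3 x2]
    unfolding B_def by simp
  moreover have "fst ` B \<subseteq> ?D"
    using assms unfolding B_def x1_def x2_def x3_def by (auto simp: image_iff)
  moreover assume "hyperconvex ?D gdist"
  ultimately obtain z where "z \<in> ?D" and z: "\<forall>(x, r) \<in> B. gdist x z \<le> r"
    unfolding hyperconvex_def by meson
  then have z1: "gdist x1 z \<le> 2 - (b - a)" and z2: "gdist x2 z \<le> 1" and z3: "gdist x3 z \<le> 1"
    unfolding B_def by simp_all
  show False
  proof (cases z)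
    case (Inl q)
    have "gdist (Inl q) (Inr (0, -2)) \<le> 1" "gdist (Inl q) (Inr (2, 0)) \<le> 1"
      using z2 z3 glue_dist_commute unfolding Inl x2_def x3_def by metis+
    then have "linf_dist (fst q, b * fst q) (0, -2) \<le> 1" "linf_dist (fst q, b * fst q) (2, 0) \<le> 1"
      using glue_dist_ge_linf_dist_projection[of a b q] assms by (meson less_imp_le order_trans)+
    then have "(fst q, b * fst q) = (1, -1)" by (rule linf_dist_two_unit_balls)
    then show False using assms by auto
  next
    case (Inr q)
    have "linf_dist q (0, -2) \<le> 1" "linf_dist q (2, 0) \<le> 1"
      using z2 z3 M1.commute unfolding Inr x2_def x3_def by (simp_all add: glue_dist_def)
    then have "q = (1, -1)" by (rule linf_dist_two_unit_balls)
    then show False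
      using z1 glue_dist_across_wedge[of a b] assms unfolding Inr x1_def by simp
  qed
qed

theorem mainTheorem17:
  fixes a b :: real
  assumes "0 \<le> a" and "a \<le> b" and "b \<le> 1"
  shows "hyperconvex
           (glue_space {p. snd p \<ge> a * fst p} {p. snd p \<le> b * fst p}
                       (\<lambda>t::real. (t, a * t)) (\<lambda>t. (t, b * t)))
           (glue_metric linf_dist linf_dist (\<lambda>t::real. (t, a * t)) (\<lambda>t. (t, b * t)))
         \<longleftrightarrow> a = b"
proof -
  have ab: "0 \<le> a" "a \<le> 1" "0 \<le> b" "b \<le> 1"
    using assms by simp_all
  interpret metric_gluing linf_dist linf_dist "\<lambda>t. (t, a * t)" "\<lambda>t. (t, b * t)"
    using metric_gluing_lines[OF ab] .
  show ?thesis
    unfolding hyperconvex_glue_space_iff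
    using hyperconvex_glued_half_planes_same_line[OF ab(1,2)]
      not_hyperconvex_glued_half_planes[OF assms(1) _ assms(3)] assms(2)
    by (cases "a = b") auto
qed

end
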